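(* For every $\zeta\in M^0$, the functional $\delta^H_\zeta$ defines a metric on $\mathrm{Conv}_{\mathrm{coe}}(\mathbb{R}^n)$.
   Context: $M^0$ is the set of continuous, strictly decreasing $\zeta:\mathbb{R}\to(0,\infty)$ with $\int_0^\infty\zeta(t)dt<\infty$. $\mathrm{Conv}_{\mathrm{coe}}(\mathbb{R}^n)$ is the set of proper, lower semicontinuous, convex, coercive functions $u:\mathbb{R}^n\to\mathbb{R}\cup\{+\infty\}$. With $\mathcal{K}^n$ the non-empty compact convex sets and $d_H$ the Hausdorff metric, define $\hat d_H$ on $\mathcal{K}^n\cup\{\emptyset\}$ by $\hat d_H(K,L)=d_H(K,L)$ if both non-empty, $\hat d_H(\emptyset,\emptyset)=0$, and $\hat d_H(K,\emptyset)=\hat d_H(\emptyset,K)=\max\{1,d_H(K,\{0\})\}$ for $K\ne\emptyset$. Then $\delta^H_\zeta(u,v)=\int_0^{\infty}\hat d_H(\{\zeta\circ u\ge s\},\{\zeta\circ v\ge s\})\,ds$, where $\{\zeta\circ u\ge s\}=\{x:\zeta(u(x))\ge s\}$ and $\zeta(+\infty):=0$. *)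

theory Defs
  imports "HOL-Analysis.Analysis"
begin

definition M0 :: "(real \<Rightarrow> real) set" where
  "M0 = {\<zeta>. continuous_on UNIV \<zeta> \<and> (\<forall>s t. s < t \<longrightarrow> \<zeta> t < \<zeta> s) \<and> (\<forall>t. 0 < \<zeta> t)
            \<and> (\<integral>\<^sup>+ t\<in>{0..}. ennreal (\<zeta> t) \<partial>lborel) < \<infinity>}"

text \<open>Functions with values in R \<union> {+\<infinity>} are modelled as ereal-valued functions never taking -\<infinity>.\<close>
definition proper_fun :: "('a \<Rightarrow> ereal) \<Rightarrow> bool" where
  "proper_fun u \<longleftrightarrow> (\<exists>x. u x \<noteq> \<infinity>) \<and> (\<forall>x. u x \<noteq> -\<infinity>)"

definition lsc_fun :: "('a::topological_space \<Rightarrow> ereal) \<Rightarrow> bool" where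
  "lsc_fun u \<longleftrightarrow> (\<forall>x. \<forall>t. t < u x \<longrightarrow> (\<forall>\<^sub>F y in at x. t < u y))"

definition convex_fun :: "('a::real_vector \<Rightarrow> ereal) \<Rightarrow> bool" where
  "convex_fun u \<longleftrightarrow> (\<forall>x y. \<forall>l::real. 0 < l \<and> l < 1 \<longrightarrow>
      u (l *\<^sub>R x + (1 - l) *\<^sub>R y) \<le> ereal l * u x + ereal (1 - l) * u y)"

definition coercive_fun :: "('a::real_normed_vector \<Rightarrow> ereal) \<Rightarrow> bool" where
  "coercive_fun u \<longleftrightarrow> (u \<longlongrightarrow> \<infinity>) at_infinity"

definition Conv_coe :: "('a::euclidean_space \<Rightarrow> ereal) set" where
  "Conv_coe = {u. proper_fun u \<and> lsc_fun u \<and> convex_fun u \<and> coercive_fun u}"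

definition hausdorff_dist :: "'a::metric_space set \<Rightarrow> 'a set \<Rightarrow> real" where
  "hausdorff_dist K L = max (Sup ((\<lambda>x. infdist x L) ` K)) (Sup ((\<lambda>y. infdist y K) ` L))"

definition hat_dH :: "'a::real_normed_vector set \<Rightarrow> 'a set \<Rightarrow> real" where
  "hat_dH K L =
     (if K = {} \<and> L = {} then 0
      else if L = {} then max 1 (hausdorff_dist K {0})
      else if K = {} then max 1 (hausdorff_dist L {0})
      else hausdorff_dist K L)"

text \<open>zeta extended by zeta(+\<infinity>) = 0 (the value at -\<infinity> is irrelevant for proper functions).\<close>
definition zeta_ext :: "(real \<Rightarrow> real) \<Rightarrow> ereal \<Rightarrow> real" where
  "zeta_ext \<zeta> a = (case a of ereal r \<Rightarrow> \<zeta> r | _ \<Rightarrow> 0)"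

definition superlevel :: "(real \<Rightarrow> real) \<Rightarrow> ('a \<Rightarrow> ereal) \<Rightarrow> real \<Rightarrow> 'a set" where
  "superlevel \<zeta> u s = {x. s \<le> zeta_ext \<zeta> (u x)}"

definition delta_H :: "(real \<Rightarrow> real) \<Rightarrow> ('a::real_normed_vector \<Rightarrow> ereal) \<Rightarrow> ('a \<Rightarrow> ereal) \<Rightarrow> ennreal" where
  "delta_H \<zeta> u v = (\<integral>\<^sup>+ s\<in>{0..}. ennreal (hat_dH (superlevel \<zeta> u s) (superlevel \<zeta> v s)) \<partial>lborel)"

end

(* For s > 0 the level set {\<zeta> \<circ> u \<ge> s} of u \<in> Conv_coe is compact: it is closed because u is
   lower semicontinuous and \<zeta> is continuous and strictly decreasing, and bounded because a coercive
   convex function grows at least linearly, A |x| - B \<le> u x.  On compact sets with the empty set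
   adjoined, hat_dH is a metric, so symmetry, the triangle inequality and \<delta>(u,u) = 0 hold pointwise in s.
   Integrating them requires measurability in s, which comes from writing the Hausdorff excess as a
   supremum over a countable dense set of points y of differences of the monotone functions
   s \<mapsto> infdist y (K s).  Finiteness: every point of the level set at height s has norm at most
   |{t \<ge> -B. \<zeta> t \<ge> s}| / A, and by Tonelli these lengths integrate over s > 0 to the integral of \<zeta>
   over [-B, \<infinity>), which is finite.  Definiteness: if u x < v x, then x lies in the level set of u but
   not in that of v for every s strictly between \<zeta>(v x) and \<zeta>(u x), an interval of positive measure. *)

theory Submission
  imports Defs
begin

section \<open>Hausdorff distance\<close>

definition hausdorff_excess :: "'a::metric_space set \<Rightarrow> 'a set \<Rightarrow> real" where
  "hausdorff_excess K L = (SUP x\<in>K. infdist x L)"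

lemma hausdorff_dist_eq_max_excess:
  "hausdorff_dist K L = max (hausdorff_excess K L) (hausdorff_excess L K)"
  by (simp add: hausdorff_dist_def hausdorff_excess_def)

lemma bdd_above_infdist_image:
  assumes "bounded K"
  shows "bdd_above ((\<lambda>x. infdist x L) ` K)"
proof -
  obtain a e where ae: "\<And>x. x \<in> K \<Longrightarrow> dist x a \<le> e"
    using assms unfolding bounded_def by (metis dist_commute)
  have "infdist x L \<le> infdist a L + e" if "x \<in> K" for x
    using infdist_triangle[of x L a] ae[OF that] by linarith
  then show ?thesis
    by (rule bdd_aboveI2)
qed

lemma infdist_le_hausdorff_excess:
  "bounded K \<Longrightarrow> x \<in> K \<Longrightarrow> infdist x L \<le> hausdorff_excess K L"
  unfolding hausdorff_excess_def by (rule cSUP_upper) (auto intro: bdd_above_infdist_image)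

lemma hausdorff_excess_le:
  "K \<noteq> {} \<Longrightarrow> (\<And>x. x \<in> K \<Longrightarrow> infdist x L \<le> c) \<Longrightarrow> hausdorff_excess K L \<le> c"
  unfolding hausdorff_excess_def by (rule cSUP_least)

lemma hausdorff_excess_nonneg: "bounded K \<Longrightarrow> K \<noteq> {} \<Longrightarrow> 0 \<le> hausdorff_excess K L"
  by (meson ex_in_conv infdist_le_hausdorff_excess infdist_nonneg order_trans)

lemma hausdorff_excess_self: "K \<noteq> {} \<Longrightarrow> hausdorff_excess K K = 0"
  by (simp add: hausdorff_excess_def infdist_zero cong: SUP_cong)

lemma infdist_le_infdist_add_hausdorff_excess:
  assumes "bounded L" "L \<noteq> {}"
  shows "infdist x M \<le> infdist x L + hausdorff_excess L M"
proof -
  have "infdist x M - hausdorff_excess L M \<le> dist x y" if "y \<in> L" for y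
    using infdist_triangle[of x M y] infdist_le_hausdorff_excess[OF assms(1) that, of M] by simp
  then have "infdist x M - hausdorff_excess L M \<le> infdist x L"
    using assms(2) by (simp add: infdist_def cINF_greatest)
  then show ?thesis by simp
qed

lemma hausdorff_excess_triangle:
  assumes "bounded K" "K \<noteq> {}" "bounded L" "L \<noteq> {}"
  shows "hausdorff_excess K M \<le> hausdorff_excess K L + hausdorff_excess L M"
proof (rule hausdorff_excess_le[OF assms(2)])
  fix x assume "x \<in> K"
  then show "infdist x M \<le> hausdorff_excess K L + hausdorff_excess L M"
    using infdist_le_infdist_add_hausdorff_excess[OF assms(3,4), of x M]
      infdist_le_hausdorff_excess[OF assms(1), of x L] by linarith
qed

lemma hausdorff_excess_le_0_imp_subset:
  assumes "bounded K" "closed L" "L \<noteq> {}" "hausdorff_excess K L \<le> 0"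
  shows "K \<subseteq> L"
proof
  fix x assume "x \<in> K"
  then have "infdist x L = 0"
    using infdist_le_hausdorff_excess[OF assms(1)] infdist_nonneg assms(4) by (metis antisym order_trans)
  then show "x \<in> L"
    using in_closure_iff_infdist_zero[OF assms(3)] assms(2) closure_closed by metis
qed

lemma hausdorff_excess_le_norm_bound:
  fixes K L :: "'a::real_normed_vector set"
  assumes "K \<noteq> {}" "L \<noteq> {}" "\<And>x. x \<in> K \<Longrightarrow> norm x \<le> R" "\<And>y. y \<in> L \<Longrightarrow> norm y \<le> R'"
  shows "hausdorff_excess K L \<le> R + R'"
proof (rule hausdorff_excess_le[OF assms(1)])
  fix x assume "x \<in> K"
  obtain y where "y \<in> L" using assms(2) by blast
  then have "infdist x L \<le> norm x + norm y"
    using infdist_le[of y L x] norm_triangle_ineq4[of x y] by (simp add: dist_norm)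
  then show "infdist x L \<le> R + R'"
    using assms(3)[OF \<open>x \<in> K\<close>] assms(4)[OF \<open>y \<in> L\<close>] by linarith
qed

lemma hausdorff_dist_commute: "hausdorff_dist K L = hausdorff_dist L K"
  by (simp add: hausdorff_dist_def max.commute)

lemma hausdorff_dist_nonneg: "bounded K \<Longrightarrow> K \<noteq> {} \<Longrightarrow> 0 \<le> hausdorff_dist K L"
  by (simp add: hausdorff_dist_eq_max_excess hausdorff_excess_nonneg le_max_iff_disj)

lemma hausdorff_dist_self: "K \<noteq> {} \<Longrightarrow> hausdorff_dist K K = 0"
  by (simp add: hausdorff_dist_eq_max_excess hausdorff_excess_self)

lemma hausdorff_dist_triangle:
  assumes "bounded K" "K \<noteq> {}" "bounded L" "L \<noteq> {}" "bounded M" "M \<noteq> {}"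
  shows "hausdorff_dist K M \<le> hausdorff_dist K L + hausdorff_dist L M"
  using hausdorff_excess_triangle[of K L M] hausdorff_excess_triangle[of M L K] assms
  unfolding hausdorff_dist_eq_max_excess by fastforce

lemma hausdorff_dist_eq_0_imp_eq:
  assumes "bounded K" "closed K" "K \<noteq> {}" "bounded L" "closed L" "L \<noteq> {}"
    and "hausdorff_dist K L = 0"
  shows "K = L"
  using hausdorff_excess_le_0_imp_subset[of K L] hausdorff_excess_le_0_imp_subset[of L K] assms
  unfolding hausdorff_dist_eq_max_excess by (metis max.cobounded1 max.cobounded2 subset_antisym)

lemma hausdorff_dist_le_norm_bound:
  fixes K L :: "'a::real_normed_vector set"
  assumes "K \<noteq> {}" "L \<noteq> {}" "\<And>x. x \<in> K \<Longrightarrow> norm x \<le> R" "\<And>y. y \<in> L \<Longrightarrow> norm y \<le> R'"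
  shows "hausdorff_dist K L \<le> R + R'"
  using hausdorff_excess_le_norm_bound[OF assms] hausdorff_excess_le_norm_bound[OF assms(2,1,4,3)]
  by (simp add: hausdorff_dist_eq_max_excess)

lemma hat_dH_commute: "hat_dH K L = hat_dH L K"
  by (auto simp: hat_dH_def hausdorff_dist_commute)

lemma hat_dH_self [simp]: "hat_dH K K = 0"
  by (simp add: hat_dH_def hausdorff_dist_self)

lemma hat_dH_nonneg: "bounded K \<Longrightarrow> bounded L \<Longrightarrow> 0 \<le> hat_dH K L"
  by (auto simp: hat_dH_def intro: hausdorff_dist_nonneg)

lemma hat_dH_eq_0_imp_eq:
  assumes "bounded K" "closed K" "bounded L" "closed L" "hat_dH K L = 0"
  shows "K = L"
  using assms hausdorff_dist_eq_0_imp_eq[of K L] by (auto simp: hat_dH_def split: if_splits)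

lemma hat_dH_le_norm_bound:
  fixes K L :: "'a::real_normed_vector set"
  assumes "\<And>x. x \<in> K \<Longrightarrow> norm x \<le> R" "\<And>y. y \<in> L \<Longrightarrow> norm y \<le> R'" "0 \<le> R" "0 \<le> R'"
  shows "hat_dH K L \<le> 1 + R + R'"
proof -
  have "hausdorff_dist K {0} \<le> R + 0" if "K \<noteq> {}"
    by (rule hausdorff_dist_le_norm_bound) (use that assms(1) in auto)
  moreover have "hausdorff_dist L {0} \<le> R' + 0" if "L \<noteq> {}"
    by (rule hausdorff_dist_le_norm_bound) (use that assms(2) in auto)
  moreover have "hausdorff_dist K L \<le> R + R'" if "K \<noteq> {}" "L \<noteq> {}"
    using hausdorff_dist_le_norm_bound that assms(1,2) by blast
  ultimately show ?thesis
    using assms(3,4) unfolding hat_dH_def by force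
qed

lemma hat_dH_triangle_empty:
  fixes K L :: "'a::real_normed_vector set"
  assumes "bounded K" "K \<noteq> {}" "bounded L"
  shows "hat_dH K {} \<le> hat_dH K L + hat_dH L {}"
proof (cases "L = {}")
  case False
  have "hausdorff_dist K {0} \<le> hausdorff_dist K L + hausdorff_dist L {0}"
    using hausdorff_dist_triangle[of K L "{0}"] assms False by simp
  moreover have "0 \<le> hausdorff_dist K L"
    using hausdorff_dist_nonneg assms(1,2) by blast
  ultimately show ?thesis
    using assms(2) False by (simp add: hat_dH_def) linarith
qed simp

lemma hat_dH_triangle:
  fixes K L M :: "'a::real_normed_vector set"
  assumes "bounded K" "bounded L" "bounded M"
  shows "hat_dH K M \<le> hat_dH K L + hat_dH L M"
proof -
  consider "K = {}" "M = {}" | "K \<noteq> {}" "M = {}" | "K = {}" "M \<noteq> {}"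
    | "K \<noteq> {}" "M \<noteq> {}" "L = {}" | "K \<noteq> {}" "M \<noteq> {}" "L \<noteq> {}"
    by blast
  then show ?thesis
  proof cases
    case 1
    then show ?thesis using hat_dH_nonneg[of K L] hat_dH_nonneg[of L M] assms by simp
  next
    case 2
    then show ?thesis using hat_dH_triangle_empty[of K L] assms by simp
  next
    case 3
    then show ?thesis using hat_dH_triangle_empty[of M L] assms by (simp add: hat_dH_commute add.commute)
  next
    case 4
    have "hausdorff_dist K M \<le> hausdorff_dist K {0} + hausdorff_dist {0} M"
      using hausdorff_dist_triangle[of K "{0}" M] assms 4 by simp
    then show ?thesis using 4 by (simp add: hat_dH_def hausdorff_dist_commute[of "{0}" M])
  next
    case 5
    then show ?thesis using hausdorff_dist_triangle[of K L M] assms by (simp add: hat_dH_def)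
  qed
qed

lemma compact_norm_bound_ennreal:
  fixes K :: "'a::real_normed_vector set"
  assumes "compact K" "\<And>x. x \<in> K \<Longrightarrow> ennreal (norm x) \<le> r"
  obtains R where "0 \<le> R" "\<And>x. x \<in> K \<Longrightarrow> norm x \<le> R" "ennreal R \<le> r"
proof (cases "K = {}")
  case True
  then show thesis
    using that[of 0] by simp
next
  case False
  then obtain x0 where "x0 \<in> K" "\<And>x. x \<in> K \<Longrightarrow> norm x \<le> norm x0"
    using continuous_attains_sup[OF assms(1) False continuous_on_norm_id] by blast
  then show thesis
    using that[of "norm x0"] assms(2) by simp
qed

section \<open>Weight functions\<close>

lemma M0D:
  assumes "\<zeta> \<in> M0"
  shows "continuous_on UNIV \<zeta>" "\<And>s t. s < t \<Longrightarrow> \<zeta> t < \<zeta> s" "\<And>t. 0 < \<zeta> t"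
    and "(\<integral>\<^sup>+ t\<in>{0..}. ennreal (\<zeta> t) \<partial>lborel) < \<infinity>"
  using assms by (auto simp: M0_def)

lemma M0_antimono:
  assumes "\<zeta> \<in> M0"
  shows "antimono \<zeta>"
proof (rule antimonoI)
  fix s t :: real
  assume "s \<le> t"
  then show "\<zeta> t \<le> \<zeta> s"
    using M0D(2)[OF assms, of s t] by (cases "s = t") auto
qed

lemma M0_borel_measurable: "\<zeta> \<in> M0 \<Longrightarrow> \<zeta> \<in> borel_measurable borel"
  using M0D(1) borel_measurable_continuous_onI by blast

lemma M0_exists_less:
  assumes "\<zeta> \<in> M0" "0 < s"
  obtains T where "\<zeta> T < s"
proof (rule ccontr)
  assume "\<not> thesis"
  with that have ge: "s \<le> \<zeta> T" for T
    by (meson not_less)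
  have "ennreal (s * n) \<le> (\<integral>\<^sup>+ t\<in>{0..}. ennreal (\<zeta> t) \<partial>lborel)" for n :: nat
  proof -
    have "ennreal (s * n) = (\<integral>\<^sup>+ t. ennreal s * indicator {0..real n} t \<partial>lborel)"
      using assms(2) by (simp add: nn_integral_cmult_indicator ennreal_mult)
    also have "\<dots> \<le> (\<integral>\<^sup>+ t\<in>{0..}. ennreal (\<zeta> t) \<partial>lborel)"
      by (intro nn_integral_mono) (auto simp: indicator_def ge ennreal_leI)
    finally show ?thesis .
  qed
  moreover obtain r where r: "(\<integral>\<^sup>+ t\<in>{0..}. ennreal (\<zeta> t) \<partial>lborel) = ennreal r" "0 \<le> r"
    using M0D(4)[OF assms(1)] by (cases "\<integral>\<^sup>+ t\<in>{0..}. ennreal (\<zeta> t) \<partial>lborel" rule: ennreal_cases) auto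
  ultimately have le: "s * n \<le> r" for n :: nat
    by (simp add: ennreal_le_iff)
  obtain n :: nat where "r / s < n"
    using reals_Archimedean2 by blast
  then show False
    using le[of n] assms(2) by (simp add: field_simps)
qed

lemma M0_exists_less_left:
  assumes "\<zeta> \<in> M0" "\<zeta> r < s"
  obtains T where "T < r" "\<zeta> T < s"
proof -
  have "isCont \<zeta> r"
    using M0D(1)[OF assms(1)] by (simp add: continuous_on_eq_continuous_at)
  then have "\<forall>\<^sub>F t in at r. \<zeta> t < s"
    using assms(2) by (simp add: isCont_def order_tendstoD(2))
  then have "\<forall>\<^sub>F t in at_left r. \<zeta> t < s"
    by (simp add: eventually_at_split)
  then obtain b where "b < r" "\<And>t. b < t \<Longrightarrow> t < r \<Longrightarrow> \<zeta> t < s"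
    by (auto simp: eventually_at_left_field)
  then show ?thesis
    using that[of "(b + r) / 2"] by simp
qed

lemma M0_nn_integral_Ici_finite:
  assumes "\<zeta> \<in> M0"
  shows "(\<integral>\<^sup>+ t\<in>{a..}. ennreal (\<zeta> t) \<partial>lborel) < \<infinity>"
proof -
  note [measurable] = M0_borel_measurable[OF assms]
  define b where "b = min a 0"
  have "(\<integral>\<^sup>+ t\<in>{a..}. ennreal (\<zeta> t) \<partial>lborel)
      \<le> (\<integral>\<^sup>+ t. ennreal (\<zeta> b) * indicator {b..0} t + ennreal (\<zeta> t) * indicator {0..} t \<partial>lborel)"
  proof (rule nn_integral_mono)
    fix t
    have "\<zeta> t \<le> \<zeta> b" if "b \<le> t"
      using antimonoD[OF M0_antimono[OF assms] that] .
    then show "ennreal (\<zeta> t) * indicator {a..} t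
        \<le> ennreal (\<zeta> b) * indicator {b..0} t + ennreal (\<zeta> t) * indicator {0..} t"
      by (auto simp: indicator_def b_def ennreal_leI)
  qed
  also have "\<dots> = ennreal (\<zeta> b) * ennreal (- b) + (\<integral>\<^sup>+ t\<in>{0..}. ennreal (\<zeta> t) \<partial>lborel)"
    by (subst nn_integral_add) (auto simp: nn_integral_cmult_indicator b_def)
  also have "\<dots> < \<infinity>"
    using M0D(4)[OF assms] by (simp add: ennreal_mult_less_top)
  finally show ?thesis .
qed

lemma zeta_ext_nonneg: "\<zeta> \<in> M0 \<Longrightarrow> 0 \<le> zeta_ext \<zeta> a"
  using M0D(3)[of \<zeta>] by (cases a) (auto simp: zeta_ext_def less_imp_le)

lemma zeta_ext_strict_antimono:
  assumes "\<zeta> \<in> M0" "a \<noteq> -\<infinity>" "a < b"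
  shows "zeta_ext \<zeta> b < zeta_ext \<zeta> a"
  using assms M0D(2,3)[OF assms(1)] by (cases a; cases b) (auto simp: zeta_ext_def)

section \<open>Superlevel sets of coercive convex functions\<close>

lemma superlevel_antimono: "antimono (superlevel \<zeta> u)"
  by (auto simp: superlevel_def intro!: antimonoI)

lemma superlevel_nonpos:
  assumes "\<zeta> \<in> M0" "s \<le> 0"
  shows "superlevel \<zeta> u s = UNIV"
  using order_trans[OF assms(2) zeta_ext_nonneg[OF assms(1)]] by (auto simp: superlevel_def)

lemma lsc_fun_open_strict_superlevel:
  assumes "lsc_fun u"
  shows "open {x. t < u x}"
proof (subst open_subopen, intro ballI)
  fix x assume "x \<in> {x. t < u x}"
  then have "t < u x" by simp
  then have "\<forall>\<^sub>F y in at x. t < u y"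
    using assms unfolding lsc_fun_def by blast
  then obtain S where S: "open S" "x \<in> S" "\<And>y. y \<in> S \<Longrightarrow> y \<noteq> x \<Longrightarrow> t < u y"
    unfolding eventually_at_topological by auto
  then have "S \<subseteq> {x. t < u x}"
    using \<open>t < u x\<close> by fastforce
  then show "\<exists>S. open S \<and> x \<in> S \<and> S \<subseteq> {x. t < u x}"
    using S by blast
qed

lemma closed_superlevel:
  assumes "\<zeta> \<in> M0" "lsc_fun u" "\<And>x. u x \<noteq> -\<infinity>" "0 < s"
  shows "closed (superlevel \<zeta> u s)"
proof -
  have "superlevel \<zeta> u s = (\<Inter>T\<in>{T. \<zeta> T < s}. - {x. ereal T < u x})"
  proof (intro equalityI subsetI)
    fix x assume x: "x \<in> superlevel \<zeta> u s"
    show "x \<in> (\<Inter>T\<in>{T. \<zeta> T < s}. - {x. ereal T < u x})"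
    proof (clarsimp)
      fix T assume "\<zeta> T < s" "ereal T < u x"
      then have "zeta_ext \<zeta> (u x) < zeta_ext \<zeta> (ereal T)"
        using zeta_ext_strict_antimono[OF assms(1)] by simp
      then show False
        using x \<open>\<zeta> T < s\<close> by (simp add: superlevel_def zeta_ext_def)
    qed
  next
    fix x assume x: "x \<in> (\<Inter>T\<in>{T. \<zeta> T < s}. - {x. ereal T < u x})"
    show "x \<in> superlevel \<zeta> u s"
    proof (rule ccontr)
      assume "x \<notin> superlevel \<zeta> u s"
      then have lt: "zeta_ext \<zeta> (u x) < s"
        by (simp add: superlevel_def)
      show False
      proof (cases "u x")
        case (real r)
        then obtain T where "T < r" "\<zeta> T < s"
          using M0_exists_less_left[OF assms(1)] lt by (auto simp: zeta_ext_def)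
        then show False using x real by auto
      next
        case PInf
        obtain T where "\<zeta> T < s"
          using M0_exists_less[OF assms(1,4)] .
        then show False using x PInf by auto
      qed (use assms(3) in simp)
    qed
  qed
  then show ?thesis
    using lsc_fun_open_strict_superlevel[OF assms(2)] by (auto intro!: closed_INT)
qed

lemma lsc_fun_bounded_below_on_compact:
  fixes u :: "'a::topological_space \<Rightarrow> ereal"
  assumes "lsc_fun u" "\<And>x. u x \<noteq> -\<infinity>" "compact S"
  obtains b where "\<And>x. x \<in> S \<Longrightarrow> ereal b \<le> u x"
proof -
  have "S \<subseteq> (\<Union>b. {x. ereal b < u x})"
  proof
    fix x
    show "x \<in> (\<Union>b. {x. ereal b < u x})"
    proof (cases "u x")
      case (real r)
      then have "ereal (r - 1) < u x" by simp
      then show ?thesis by blast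
    next
      case PInf
      then have "ereal 0 < u x" by simp
      then show ?thesis by blast
    qed (use assms(2) in simp)
  qed
  then obtain B where B: "finite B" "S \<subseteq> (\<Union>b\<in>B. {x. ereal b < u x})"
    using compactE_image[OF assms(3), of UNIV "\<lambda>b. {x. ereal b < u x}"]
      lsc_fun_open_strict_superlevel[OF assms(1)] by metis
  have "ereal (Min (insert 0 B)) \<le> u x" if x: "x \<in> S" for x
  proof -
    obtain b where "b \<in> B" "ereal b < u x"
      using B(2) x by blast
    moreover have "ereal (Min (insert 0 B)) \<le> ereal b"
      using B(1) \<open>b \<in> B\<close> by simp
    ultimately show ?thesis
      by (meson less_imp_le order_trans)
  qed
  then show thesis
    using that by blast
qed

lemma convex_fun_growth_outside_sphere:
  fixes u :: "'a::real_normed_vector \<Rightarrow> ereal"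
  assumes "convex_fun u" "u x0 = ereal c" "0 < \<rho>"
    and sphere: "\<And>y. dist y x0 = \<rho> \<Longrightarrow> ereal (c + 1) \<le> u y"
    and "\<rho> \<le> dist x x0"
  shows "ereal (c + dist x x0 / \<rho>) \<le> u x"
proof -
  define l where "l = \<rho> / dist x x0"
  have d: "0 < dist x x0"
    using assms(3,5) by linarith
  then have l: "0 < l" "l \<le> 1"
    using assms(3,5) by (simp_all add: l_def)
  define y where "y = l *\<^sub>R x + (1 - l) *\<^sub>R x0"
  have "dist y x0 = l * dist x x0"
    using l by (simp add: y_def dist_norm algebra_simps flip: scaleR_diff_right)
  then have uy: "ereal (c + 1) \<le> u y"
    using d by (intro sphere) (simp add: l_def)
  show ?thesis
  proof (cases "l = 1")
    case True
    then show ?thesis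
      using uy assms(3) by (simp add: y_def l_def)
  next
    case False
    with l have "0 < l \<and> l < 1"
      by simp
    then have "u y \<le> ereal l * u x + ereal (1 - l) * u x0"
      using assms(1) unfolding convex_fun_def y_def by blast
    with uy assms(2) have bound: "ereal (c + 1) \<le> ereal l * u x + ereal ((1 - l) * c)"
      by simp
    then show ?thesis
    proof (cases "u x")
      case (real r)
      with bound have "1 \<le> l * (r - c)"
        by (simp add: algebra_simps)
      then have "1 / l \<le> r - c"
        using l by (simp add: field_simps)
      then show ?thesis
        using real by (simp add: l_def)
    qed (use l in auto)
  qed
qed

lemma linear_lower_bound_of_cball:
  fixes u :: "'a::real_normed_vector \<Rightarrow> ereal"
  assumes \<rho>: "0 < \<rho>"
    and far: "\<And>x. \<rho> \<le> dist x x0 \<Longrightarrow> ereal (c + dist x x0 / \<rho>) \<le> u x"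
    and near: "\<And>x. x \<in> cball x0 \<rho> \<Longrightarrow> ereal b \<le> u x"
  obtains B where "\<And>x. ereal (norm x / \<rho> - B) \<le> u x"
proof -
  define B where "B = max (norm x0 / \<rho> - c) (1 + norm x0 / \<rho> - b)"
  have "ereal (norm x / \<rho> - B) \<le> u x" for x
  proof (cases "\<rho> \<le> dist x x0")
    case True
    have "norm x - norm x0 \<le> dist x x0"
      using norm_triangle_ineq2[of x x0] by (simp add: dist_norm)
    then have "norm x / \<rho> - norm x0 / \<rho> \<le> dist x x0 / \<rho>"
      using \<rho> by (simp add: divide_right_mono flip: diff_divide_distrib)
    moreover have "norm x0 / \<rho> - c \<le> B"
      by (simp add: B_def)
    ultimately have "norm x / \<rho> - B \<le> c + dist x x0 / \<rho>"
      by linarith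
    then show ?thesis
      using far[OF True] by (meson ereal_less_eq(3) order_trans)
  next
    case False
    then have "norm x \<le> norm x0 + \<rho>"
      using norm_triangle_ineq2[of x x0] by (simp add: dist_norm)
    then have "norm x / \<rho> \<le> norm x0 / \<rho> + 1"
      using \<rho> by (simp add: field_simps)
    moreover have "1 + norm x0 / \<rho> - b \<le> B"
      by (simp add: B_def)
    ultimately have "norm x / \<rho> - B \<le> b"
      by linarith
    then show ?thesis
      using near[of x] False by (simp add: dist_commute) (meson ereal_less_eq(3) order_trans)
  qed
  then show thesis
    using that by blast
qed

lemma Conv_coe_linear_lower_bound:
  fixes u :: "'a::euclidean_space \<Rightarrow> ereal"
  assumes "u \<in> Conv_coe"
  obtains A B where "0 < A" "\<And>x. ereal (A * norm x - B) \<le> u x"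
proof -
  have proper: "proper_fun u" and lsc: "lsc_fun u" and convex: "convex_fun u"
    and coercive: "coercive_fun u"
    using assms by (auto simp: Conv_coe_def)
  have not_MInf: "\<And>x. u x \<noteq> -\<infinity>"
    using proper by (simp add: proper_fun_def)
  obtain x0 c where c: "u x0 = ereal c"
    using proper not_MInf by (metis ereal_cases proper_fun_def)
  have "\<forall>\<^sub>F x in at_infinity. ereal (c + 1) < u x"
    using coercive unfolding coercive_fun_def by (rule order_tendstoD(1)) simp
  then obtain b0 where b0: "\<And>x. b0 \<le> norm x \<Longrightarrow> ereal (c + 1) < u x"
    unfolding eventually_at_infinity by blast
  define \<rho> where "\<rho> = max b0 0 + norm x0 + 1"
  have \<rho>: "0 < \<rho>"
    by (simp add: \<rho>_def add_nonneg_pos)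
  have far: "ereal (c + dist x x0 / \<rho>) \<le> u x" if "\<rho> \<le> dist x x0" for x
  proof (rule convex_fun_growth_outside_sphere[OF convex c \<rho> _ that])
    fix y assume "dist y x0 = \<rho>"
    then have "b0 \<le> norm y"
      using norm_triangle_ineq4[of y x0] by (simp add: \<rho>_def dist_norm)
    then show "ereal (c + 1) \<le> u y"
      using b0 less_imp_le by blast
  qed
  obtain b where near: "\<And>x. x \<in> cball x0 \<rho> \<Longrightarrow> ereal b \<le> u x"
    using lsc_fun_bounded_below_on_compact[OF lsc not_MInf compact_cball] by blast
  obtain B where "\<And>x. ereal (norm x / \<rho> - B) \<le> u x"
    using linear_lower_bound_of_cball[OF \<rho> far near] by blast
  then show thesis
    using that[of "1 / \<rho>" B] \<rho> by simp
qed

lemma Conv_coe_common_linear_lower_bound: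
  fixes u v :: "'a::euclidean_space \<Rightarrow> ereal"
  assumes "u \<in> Conv_coe" "v \<in> Conv_coe"
  obtains A B where "0 < A" "\<And>x. ereal (A * norm x - B) \<le> u x" "\<And>x. ereal (A * norm x - B) \<le> v x"
proof -
  obtain A1 B1 A2 B2 where A: "0 < A1" "0 < A2"
    and lower: "\<And>x. ereal (A1 * norm x - B1) \<le> u x" "\<And>x. ereal (A2 * norm x - B2) \<le> v x"
    using Conv_coe_linear_lower_bound assms by metis
  have weaker: "ereal (min A1 A2 * norm x - max B1 B2) \<le> ereal (A' * norm x - B')"
    if "min A1 A2 \<le> A'" "B' \<le> max B1 B2" for x A' B'
    using mult_right_mono[OF that(1) norm_ge_zero[of x]] that(2) by simp
  show thesis
    using that[of "min A1 A2" "max B1 B2"] A order_trans[OF weaker lower(1)] order_trans[OF weaker lower(2)]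
    by simp
qed

lemma superlevel_imp_le_zeta:
  assumes "\<zeta> \<in> M0" "0 < s" "x \<in> superlevel \<zeta> u s" "ereal a \<le> u x"
  shows "s \<le> \<zeta> a"
proof -
  have s: "s \<le> zeta_ext \<zeta> (u x)"
    using assms(3) by (simp add: superlevel_def)
  show ?thesis
  proof (cases "u x")
    case (real r)
    then have "\<zeta> r \<le> \<zeta> a"
      using assms(4) antimonoD[OF M0_antimono[OF assms(1)]] by simp
    then show ?thesis
      using s real by (simp add: zeta_ext_def)
  qed (use s assms(2,4) in \<open>auto simp: zeta_ext_def\<close>)
qed

lemma bounded_superlevel:
  assumes "\<zeta> \<in> M0" "0 < A" "\<And>x. ereal (A * norm x - B) \<le> u x" "0 < s"
  shows "bounded (superlevel \<zeta> u s)"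
proof -
  obtain T where T: "\<zeta> T < s"
    using M0_exists_less[OF assms(1,4)] .
  have "norm x \<le> (T + B) / A" if "x \<in> superlevel \<zeta> u s" for x
  proof -
    have "s \<le> \<zeta> (A * norm x - B)"
      using superlevel_imp_le_zeta[OF assms(1,4) that assms(3)] .
    then have "\<not> T \<le> A * norm x - B"
      using T antimonoD[OF M0_antimono[OF assms(1)], of T "A * norm x - B"] by linarith
    then show ?thesis
      using assms(2) by (simp add: field_simps)
  qed
  then show ?thesis
    by (auto simp: bounded_iff)
qed

lemma compact_superlevel:
  fixes u :: "'a::euclidean_space \<Rightarrow> ereal"
  assumes "\<zeta> \<in> M0" "u \<in> Conv_coe" "0 < s"
  shows "compact (superlevel \<zeta> u s)"
proof -
  obtain A B where "0 < A" "\<And>x. ereal (A * norm x - B) \<le> u x"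
    using Conv_coe_linear_lower_bound[OF assms(2)] by blast
  then have "bounded (superlevel \<zeta> u s)"
    using bounded_superlevel[OF assms(1)] assms(3) by blast
  moreover have "closed (superlevel \<zeta> u s)"
    using closed_superlevel[OF assms(1) _ _ assms(3)] assms(2)
    by (auto simp: Conv_coe_def proper_fun_def)
  ultimately show ?thesis
    by (simp add: compact_eq_bounded_closed)
qed

lemma superlevel_norm_le_emeasure:
  assumes "\<zeta> \<in> M0" "0 < A" "0 < s" "x \<in> superlevel \<zeta> u s" "ereal (A * norm x - B) \<le> u x"
  shows "ennreal (norm x) \<le> ennreal (1 / A) * emeasure lborel {t \<in> {-B..}. s \<le> \<zeta> t}"
proof -
  note [measurable] = M0_borel_measurable[OF assms(1)]
  have "s \<le> \<zeta> (A * norm x - B)"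
    using superlevel_imp_le_zeta[OF assms(1,3,4,5)] .
  then have "{-B..A * norm x - B} \<subseteq> {t \<in> {-B..}. s \<le> \<zeta> t}"
    using antimonoD[OF M0_antimono[OF assms(1)]] by (force intro: order_trans)
  then have "emeasure lborel {-B..A * norm x - B} \<le> emeasure lborel {t \<in> {-B..}. s \<le> \<zeta> t}"
    by (rule emeasure_mono) measurable
  then have "ennreal (1 / A) * ennreal (A * norm x) \<le> ennreal (1 / A) * emeasure lborel {t \<in> {-B..}. s \<le> \<zeta> t}"
    using assms(2) by (intro mult_left_mono) simp_all
  then show ?thesis
    using assms(2) by (simp flip: ennreal_mult)
qed

section \<open>Measurability in the level parameter\<close>

lemma sets_Collect_empty_antimono:
  fixes K :: "real \<Rightarrow> 'a set"
  assumes "antimono K"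
  shows "{s. K s = {}} \<in> sets borel"
proof -
  have "mono (\<lambda>s. indicator {s. K s = {}} s :: real)"
    using assms by (auto simp: mono_def antimono_def indicator_def)
  then have "(\<lambda>s. indicator {s. K s = {}} s :: real) \<in> borel_measurable borel"
    by (rule borel_measurable_mono)
  then show ?thesis
    by (simp add: borel_measurable_indicator_iff)
qed

lemma hausdorff_excess_eq_SUP_dense:
  fixes K L :: "'a::metric_space set"
  assumes "bounded K" "K \<noteq> {}" and dense: "\<And>X. open X \<Longrightarrow> X \<noteq> {} \<Longrightarrow> \<exists>d\<in>D. d \<in> X"
  shows "bdd_above ((\<lambda>y. infdist y L - infdist y K) ` D)"
    and "hausdorff_excess K L = (SUP y\<in>D. infdist y L - infdist y K)"
proof -
  have upper: "infdist y L - infdist y K \<le> hausdorff_excess K L" for y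
    using infdist_le_infdist_add_hausdorff_excess[OF assms(1,2), of y L] by simp
  then show bdd: "bdd_above ((\<lambda>y. infdist y L - infdist y K) ` D)"
    by (intro bdd_aboveI2)
  have "D \<noteq> {}"
    using dense[of UNIV] by auto
  then have "(SUP y\<in>D. infdist y L - infdist y K) \<le> hausdorff_excess K L"
    using upper by (simp add: cSUP_least)
  moreover have "hausdorff_excess K L \<le> (SUP y\<in>D. infdist y L - infdist y K)"
  proof (rule hausdorff_excess_le[OF assms(2)])
    fix x assume "x \<in> K"
    show "infdist x L \<le> (SUP y\<in>D. infdist y L - infdist y K)"
    proof (rule field_le_epsilon)
      fix e :: real assume "0 < e"
      then obtain d where d: "d \<in> D" "dist x d < e / 2"
        using dense[of "ball x (e / 2)"] by auto
      have "infdist x L \<le> infdist d L + dist x d"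
        by (rule infdist_triangle)
      moreover have "infdist d K \<le> dist d x"
        using \<open>x \<in> K\<close> by (rule infdist_le)
      moreover have "infdist d L - infdist d K \<le> (SUP y\<in>D. infdist y L - infdist y K)"
        using bdd d(1) by (rule cSUP_upper2) simp
      ultimately show "infdist x L \<le> (SUP y\<in>D. infdist y L - infdist y K) + e"
        using d(2) by (simp add: dist_commute)
    qed
  qed
  ultimately show "hausdorff_excess K L = (SUP y\<in>D. infdist y L - infdist y K)"
    by (rule antisym[rotated])
qed

lemma borel_measurable_hausdorff_excess_antimono:
  fixes K L :: "real \<Rightarrow> 'a::{metric_space, second_countable_topology} set"
  assumes "antimono K" "antimono L"
    and "\<And>s. s \<in> A \<Longrightarrow> bounded (K s) \<and> K s \<noteq> {} \<and> L s \<noteq> {}"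
  shows "(\<lambda>s. hausdorff_excess (K s) (L s)) \<in> borel_measurable (restrict_space borel A)"
proof -
  obtain D :: "'a set" where D: "countable D" "\<And>X. open X \<Longrightarrow> X \<noteq> {} \<Longrightarrow> \<exists>d\<in>D. d \<in> X"
    using countable_dense_exists by blast
  have infdist_mono_on: "mono_on A (\<lambda>s. infdist y (M s))"
    if "antimono M" "\<And>s. s \<in> A \<Longrightarrow> M s \<noteq> {}" for M :: "real \<Rightarrow> 'a set" and y
    using that by (intro mono_onI infdist_mono) (auto dest: antimonoD)
  have "(\<lambda>s. SUP y\<in>D. infdist y (L s) - infdist y (K s)) \<in> borel_measurable (restrict_space borel A)"
  proof (rule borel_measurable_cSUP[OF D(1)])
    fix y
    show "(\<lambda>s. infdist y (L s) - infdist y (K s)) \<in> borel_measurable (restrict_space borel A)"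
      using borel_measurable_mono_on_fnc[OF infdist_mono_on] assms by (intro borel_measurable_diff) auto
  next
    fix s assume "s \<in> space (restrict_space borel A)"
    then show "bdd_above ((\<lambda>y. infdist y (L s) - infdist y (K s)) ` D)"
      using hausdorff_excess_eq_SUP_dense(1)[OF _ _ D(2)] assms(3) by (simp add: space_restrict_space)
  qed
  then show ?thesis
    by (rule measurable_cong[THEN iffD1, rotated])
      (use hausdorff_excess_eq_SUP_dense(2)[OF _ _ D(2)] assms(3) in \<open>simp add: space_restrict_space\<close>)
qed

lemma borel_measurable_hausdorff_dist_antimono:
  fixes K L :: "real \<Rightarrow> 'a::{metric_space, second_countable_topology} set"
  assumes "antimono K" "antimono L"
    and "\<And>s. s \<in> A \<Longrightarrow> bounded (K s) \<and> K s \<noteq> {} \<and> bounded (L s) \<and> L s \<noteq> {}"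
  shows "(\<lambda>s. hausdorff_dist (K s) (L s)) \<in> borel_measurable (restrict_space borel A)"
  unfolding hausdorff_dist_eq_max_excess
  using assms by (intro borel_measurable_max borel_measurable_hausdorff_excess_antimono) auto

lemma borel_measurable_hat_dH_antimono_on:
  fixes K L :: "real \<Rightarrow> 'a::{real_normed_vector, second_countable_topology} set"
  assumes K: "antimono K" and L: "antimono L"
    and \<Omega>: "\<And>s. s \<in> \<Omega> \<Longrightarrow> bounded (K s) \<and> bounded (L s) \<and> (K s = {} \<longleftrightarrow> p) \<and> (L s = {} \<longleftrightarrow> q)"
  shows "(\<lambda>s. hat_dH (K s) (L s)) \<in> borel_measurable (restrict_space borel \<Omega>)"
proof -
  have Z: "antimono (\<lambda>s::real. {0::'a})"
    by (simp add: antimonoI)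
  consider "\<not> p" "\<not> q" | "\<not> p" "q" | "p" "\<not> q" | "p" "q"
    by blast
  then show ?thesis
  proof cases
    case 1
    then show ?thesis
      using borel_measurable_hausdorff_dist_antimono[OF K L, of \<Omega>] \<Omega>
      by (subst measurable_cong[where g = "\<lambda>s. hausdorff_dist (K s) (L s)"])
        (auto simp: space_restrict_space hat_dH_def)
  next
    case 2
    then show ?thesis
      using borel_measurable_hausdorff_dist_antimono[OF K Z, of \<Omega>] \<Omega>
      by (subst measurable_cong[where g = "\<lambda>s. max 1 (hausdorff_dist (K s) {0})"])
        (auto simp: space_restrict_space hat_dH_def)
  next
    case 3
    then show ?thesis
      using borel_measurable_hausdorff_dist_antimono[OF L Z, of \<Omega>] \<Omega>
      by (subst measurable_cong[where g = "\<lambda>s. max 1 (hausdorff_dist (L s) {0})"])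
        (auto simp: space_restrict_space hat_dH_def)
  next
    case 4
    then show ?thesis
      using \<Omega> by (subst measurable_cong[where g = "\<lambda>s. 0"]) (auto simp: space_restrict_space hat_dH_def)
  qed
qed

lemma borel_measurable_hat_dH_antimono:
  fixes K L :: "real \<Rightarrow> 'a::{real_normed_vector, second_countable_topology} set"
  assumes K: "antimono K" and L: "antimono L" and A: "A \<in> sets borel"
    and bounded: "\<And>s. s \<in> A \<Longrightarrow> bounded (K s) \<and> bounded (L s)"
  shows "(\<lambda>s. hat_dH (K s) (L s)) \<in> borel_measurable (restrict_space borel A)"
proof (rule measurable_piecewise_restrict)
  define piece where "piece p q = A \<inter> {s. K s = {} \<longleftrightarrow> p} \<inter> {s. L s = {} \<longleftrightarrow> q}" for p q
  have empty_iff: "{s. M s = {} \<longleftrightarrow> p} \<in> sets borel" if "antimono M" for M :: "real \<Rightarrow> 'a set" and p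
    using sets_Collect_empty_antimono[OF that] sets.compl_sets[of "{s. M s = {}}" borel]
    by (cases p) (simp_all add: Collect_neg_eq Compl_eq_Diff_UNIV)
  have piece: "piece p q \<subseteq> A" "piece p q \<in> sets borel" for p q
    using A empty_iff[OF K] empty_iff[OF L] by (auto simp: piece_def)
  show "countable (case_prod piece ` UNIV)"
    by simp
  show "space (restrict_space borel A) \<subseteq> \<Union> (case_prod piece ` UNIV)"
    by (auto simp: piece_def space_restrict_space)
  fix \<Omega> assume "\<Omega> \<in> case_prod piece ` UNIV"
  then obtain p q where \<Omega>: "\<Omega> = piece p q"
    by auto
  then show "\<Omega> \<inter> space (restrict_space borel A) \<in> sets (restrict_space borel A)"
    using A piece by (simp add: space_restrict_space sets_restrict_space_iff Int_absorb2)
  have "restrict_space (restrict_space borel A) \<Omega> = restrict_space borel \<Omega>"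
    using A piece \<Omega> by (simp add: restrict_restrict_space Int_absorb1)
  moreover have "(\<lambda>s. hat_dH (K s) (L s)) \<in> borel_measurable (restrict_space borel \<Omega>)"
    using bounded by (intro borel_measurable_hat_dH_antimono_on[OF K L]) (auto simp: \<Omega> piece_def)
  ultimately show "(\<lambda>s. hat_dH (K s) (L s)) \<in> borel_measurable (restrict_space (restrict_space borel A) \<Omega>)"
    by simp
qed

lemma nn_integral_emeasure_superlevel_lborel:
  fixes f :: "real \<Rightarrow> real"
  assumes [measurable]: "f \<in> borel_measurable borel" "S \<in> sets borel"
  shows "(\<lambda>s. emeasure lborel {t \<in> S. s \<le> f t}) \<in> borel_measurable lborel"
    and "(\<integral>\<^sup>+ s. emeasure lborel {t \<in> S. s \<le> f t} \<partial>restrict_space lborel {0<..})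
           = (\<integral>\<^sup>+ t\<in>S. ennreal (f t) \<partial>lborel)"
proof -
  define g :: "real \<Rightarrow> real \<Rightarrow> ennreal" where "g s t = (if t \<in> S \<and> s \<le> f t then 1 else 0)" for s t
  have g[measurable]: "(\<lambda>(s, t). g s t) \<in> borel_measurable (lborel \<Otimes>\<^sub>M lborel)"
    unfolding g_def by measurable
  have emeasure_eq: "emeasure lborel {t \<in> S. s \<le> f t} = (\<integral>\<^sup>+ t. g s t \<partial>lborel)" for s
  proof -
    have "{t \<in> S. s \<le> f t} \<in> sets lborel"
      by measurable
    moreover have "g s = indicator {t \<in> S. s \<le> f t}"
      by (auto simp: g_def)
    ultimately show ?thesis
      by simp
  qed
  show "(\<lambda>s. emeasure lborel {t \<in> S. s \<le> f t}) \<in> borel_measurable lborel"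
    unfolding emeasure_eq by (rule lborel.borel_measurable_nn_integral) simp
  have "(\<integral>\<^sup>+ s. emeasure lborel {t \<in> S. s \<le> f t} \<partial>restrict_space lborel {0<..})
      = (\<integral>\<^sup>+ s. (\<integral>\<^sup>+ t. g s t * indicator {0<..} s \<partial>lborel) \<partial>lborel)"
    by (simp add: nn_integral_restrict_space emeasure_eq nn_integral_multc)
  also have "\<dots> = (\<integral>\<^sup>+ t. (\<integral>\<^sup>+ s. g s t * indicator {0<..} s \<partial>lborel) \<partial>lborel)"
    by (rule lborel_pair.Fubini'[symmetric]) measurable
  also have "\<dots> = (\<integral>\<^sup>+ t\<in>S. ennreal (f t) \<partial>lborel)"
  proof (rule nn_integral_cong)
    fix t
    have "(\<lambda>s. g s t * indicator {0<..} s) = (\<lambda>s. indicator {0<..f t} s * indicator S t)"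
      by (auto simp: g_def indicator_def)
    then show "(\<integral>\<^sup>+ s. g s t * indicator {0<..} s \<partial>lborel) = ennreal (f t) * indicator S t"
      by (cases "0 \<le> f t") (simp_all add: nn_integral_multc ennreal_neg)
  qed
  finally show "(\<integral>\<^sup>+ s. emeasure lborel {t \<in> S. s \<le> f t} \<partial>restrict_space lborel {0<..})
           = (\<integral>\<^sup>+ t\<in>S. ennreal (f t) \<partial>lborel)" .
qed

section \<open>The metric axioms for \<open>delta_H\<close>\<close>

lemma delta_H_commute: "delta_H \<zeta> u v = delta_H \<zeta> v u"
  unfolding delta_H_def by (simp add: hat_dH_commute)

lemma delta_H_self: "delta_H \<zeta> u u = 0"
  by (simp add: delta_H_def)

lemma delta_H_eq_restrict_space:
  assumes "\<zeta> \<in> M0"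
  shows "delta_H \<zeta> u v
    = (\<integral>\<^sup>+ s. ennreal (hat_dH (superlevel \<zeta> u s) (superlevel \<zeta> v s)) \<partial>restrict_space lborel {0<..})"
proof -
  have "superlevel \<zeta> u 0 = superlevel \<zeta> v 0"
    using superlevel_nonpos[OF assms, of 0 u] superlevel_nonpos[OF assms, of 0 v] by simp
  then show ?thesis
    unfolding delta_H_def
    by (subst nn_integral_restrict_space) (auto intro!: nn_integral_cong simp: indicator_def)
qed

lemma borel_measurable_hat_dH_superlevel:
  fixes u v :: "'a::euclidean_space \<Rightarrow> ereal"
  assumes "\<zeta> \<in> M0" "u \<in> Conv_coe" "v \<in> Conv_coe"
  shows "(\<lambda>s. ennreal (hat_dH (superlevel \<zeta> u s) (superlevel \<zeta> v s)))
    \<in> borel_measurable (restrict_space lborel {0<..})"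
proof -
  have "(\<lambda>s. hat_dH (superlevel \<zeta> u s) (superlevel \<zeta> v s)) \<in> borel_measurable (restrict_space borel {0<..})"
    using compact_superlevel[OF assms(1,2)] compact_superlevel[OF assms(1,3)]
    by (intro borel_measurable_hat_dH_antimono superlevel_antimono) (auto intro: compact_imp_bounded)
  then have [measurable]: "(\<lambda>s. hat_dH (superlevel \<zeta> u s) (superlevel \<zeta> v s)) \<in> borel_measurable (restrict_space lborel {0<..})"
    by (simp add: measurable_cong_sets[OF sets_restrict_space_cong[OF sets_lborel]])
  show ?thesis
    by measurable
qed

lemma delta_H_triangle:
  fixes u v w :: "'a::euclidean_space \<Rightarrow> ereal"
  assumes "\<zeta> \<in> M0" "u \<in> Conv_coe" "v \<in> Conv_coe" "w \<in> Conv_coe"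
  shows "delta_H \<zeta> u w \<le> delta_H \<zeta> u v + delta_H \<zeta> v w"
proof -
  let ?d = "\<lambda>u v s. hat_dH (superlevel \<zeta> u s) (superlevel \<zeta> v s)"
  have bounded: "bounded (superlevel \<zeta> f s)" if "f \<in> Conv_coe" "s \<in> {0<..}" for f :: "'a \<Rightarrow> ereal" and s
    using compact_superlevel[OF assms(1) that(1)] that(2) by (simp add: compact_imp_bounded)
  have "(\<integral>\<^sup>+ s. ennreal (?d u w s) \<partial>restrict_space lborel {0<..})
      \<le> (\<integral>\<^sup>+ s. ennreal (?d u v s) + ennreal (?d v w s) \<partial>restrict_space lborel {0<..})"
  proof (rule nn_integral_mono)
    fix s :: real
    assume "s \<in> space (restrict_space lborel {0<..})"
    then have s: "s \<in> {0<..}"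
      by (simp add: space_restrict_space)
    have "ennreal (?d u w s) \<le> ennreal (?d u v s + ?d v w s)"
      using bounded[OF _ s] assms by (intro ennreal_leI hat_dH_triangle) auto
    also have "\<dots> = ennreal (?d u v s) + ennreal (?d v w s)"
      using bounded[OF _ s] assms by (intro ennreal_plus hat_dH_nonneg) auto
    finally show "ennreal (?d u w s) \<le> ennreal (?d u v s) + ennreal (?d v w s)" .
  qed
  also have "\<dots> = (\<integral>\<^sup>+ s. ennreal (?d u v s) \<partial>restrict_space lborel {0<..})
      + (\<integral>\<^sup>+ s. ennreal (?d v w s) \<partial>restrict_space lborel {0<..})"
    using assms by (intro nn_integral_add borel_measurable_hat_dH_superlevel)
  finally show ?thesis
    unfolding delta_H_eq_restrict_space[OF assms(1)] .
qed

lemma hat_dH_superlevel_le: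
  fixes u v :: "'a::euclidean_space \<Rightarrow> ereal"
  assumes z: "\<zeta> \<in> M0" and "u \<in> Conv_coe" "v \<in> Conv_coe" and A: "0 < A"
    and "\<And>x. ereal (A * norm x - B) \<le> u x" "\<And>x. ereal (A * norm x - B) \<le> v x" and s: "0 < s"
  shows "ennreal (hat_dH (superlevel \<zeta> u s) (superlevel \<zeta> v s))
    \<le> indicator {0<..\<zeta> (-B)} s + 2 * (ennreal (1 / A) * emeasure lborel {t \<in> {-B..}. s \<le> \<zeta> t})"
proof -
  define r where "r = ennreal (1 / A) * emeasure lborel {t \<in> {-B..}. s \<le> \<zeta> t}"
  have bounds: "ennreal (norm x) \<le> r \<and> s \<le> \<zeta> (-B)"
    if "w \<in> {u, v}" "x \<in> superlevel \<zeta> w s" for w x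
  proof
    have lower: "ereal (A * norm x - B) \<le> w x"
      using that(1) assms(5,6) by blast
    then show "ennreal (norm x) \<le> r"
      unfolding r_def by (rule superlevel_norm_le_emeasure[OF z A s that(2)])
    have "ereal (- B) \<le> w x"
      using A order_trans[OF _ lower] by simp
    then show "s \<le> \<zeta> (-B)"
      using superlevel_imp_le_zeta[OF z s that(2)] by blast
  qed
  obtain RK where RK: "0 \<le> RK" "\<And>x. x \<in> superlevel \<zeta> u s \<Longrightarrow> norm x \<le> RK" "ennreal RK \<le> r"
    using compact_norm_bound_ennreal[OF compact_superlevel[OF z assms(2) s], of r] bounds by blast
  obtain RL where RL: "0 \<le> RL" "\<And>x. x \<in> superlevel \<zeta> v s \<Longrightarrow> norm x \<le> RL" "ennreal RL \<le> r"
    using compact_norm_bound_ennreal[OF compact_superlevel[OF z assms(3) s], of r] bounds by blast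
  show ?thesis
  proof (cases "superlevel \<zeta> u s = {} \<and> superlevel \<zeta> v s = {}")
    case True
    then show ?thesis
      by (simp add: hat_dH_def)
  next
    case False
    then have "s \<le> \<zeta> (-B)"
      using bounds by blast
    have "ennreal (hat_dH (superlevel \<zeta> u s) (superlevel \<zeta> v s)) \<le> ennreal (1 + RK + RL)"
      using RK RL by (intro ennreal_leI hat_dH_le_norm_bound)
    also have "\<dots> = 1 + ennreal RK + ennreal RL"
      using RK RL by (simp add: ennreal_plus)
    also have "\<dots> \<le> indicator {0<..\<zeta> (-B)} s + 2 * r"
      using \<open>s \<le> \<zeta> (-B)\<close> s RK(3) RL(3) by (simp add: mult_2 add.assoc add_mono)
    finally show ?thesis
      unfolding r_def .
  qed
qed

lemma delta_H_finite:
  fixes u v :: "'a::euclidean_space \<Rightarrow> ereal"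
  assumes z: "\<zeta> \<in> M0" and "u \<in> Conv_coe" "v \<in> Conv_coe"
  shows "delta_H \<zeta> u v < \<infinity>"
proof -
  note [measurable] = M0_borel_measurable[OF z]
  obtain A B where A: "0 < A"
    and lower_uv: "\<And>x. ereal (A * norm x - B) \<le> u x" "\<And>x. ereal (A * norm x - B) \<le> v x"
    using Conv_coe_common_linear_lower_bound[OF assms(2,3)] by blast
  let ?m = "\<lambda>s. emeasure lborel {t \<in> {-B..}. s \<le> \<zeta> t}"
  have m: "?m \<in> borel_measurable (restrict_space lborel {0<..})"
    using nn_integral_emeasure_superlevel_lborel(1)[of \<zeta> "{-B..}"] by (simp add: measurable_restrict_space1)
  have ind: "indicator {0<..\<zeta> (-B)} \<in> borel_measurable (restrict_space lborel {0<..})"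
    by (simp add: measurable_restrict_space1)
  have "delta_H \<zeta> u v
      \<le> (\<integral>\<^sup>+ s. indicator {0<..\<zeta> (-B)} s + 2 * (ennreal (1 / A) * ?m s) \<partial>restrict_space lborel {0<..})"
    unfolding delta_H_eq_restrict_space[OF z]
    using hat_dH_superlevel_le[OF z assms(2,3) _ lower_uv] A
    by (intro nn_integral_mono) (auto simp: space_restrict_space)
  also have "\<dots> = (\<integral>\<^sup>+ s. indicator {0<..\<zeta> (-B)} s \<partial>restrict_space lborel {0<..})
      + 2 * (ennreal (1 / A) * (\<integral>\<^sup>+ s. ?m s \<partial>restrict_space lborel {0<..}))"
    using m by (subst nn_integral_add[OF ind]) (auto simp: nn_integral_cmult)
  also have "\<dots> = emeasure lborel {0<..\<zeta> (-B)}
      + 2 * (ennreal (1 / A) * (\<integral>\<^sup>+ t\<in>{-B..}. ennreal (\<zeta> t) \<partial>lborel))"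
  proof -
    have "{0<..\<zeta> (-B)} \<subseteq> {0<..}"
      by auto
    then have "(\<integral>\<^sup>+ s. indicator {0<..\<zeta> (-B)} s \<partial>restrict_space lborel {0<..}) = emeasure lborel {0<..\<zeta> (-B)}"
      by (simp add: sets_restrict_space_iff emeasure_restrict_space)
    then show ?thesis
      using nn_integral_emeasure_superlevel_lborel(2)[of \<zeta> "{-B..}"] by simp
  qed
  also have "\<dots> < \<infinity>"
    using M0_nn_integral_Ici_finite[OF z] M0D(3)[OF z, of "-B"] by (simp add: ennreal_mult_less_top)
  finally show ?thesis .
qed

lemma le_if_AE_superlevel_eq:
  assumes z: "\<zeta> \<in> M0" and "u x \<noteq> -\<infinity>"
    and ae: "AE s in lborel. 0 < s \<longrightarrow> superlevel \<zeta> u s = superlevel \<zeta> v s"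
  shows "v x \<le> u x"
proof (rule ccontr)
  define a where "a = zeta_ext \<zeta> (v x)"
  define b where "b = zeta_ext \<zeta> (u x)"
  assume "\<not> v x \<le> u x"
  then have "a < b"
    using zeta_ext_strict_antimono[OF z assms(2)] by (simp add: a_def b_def)
  have "AE s in lborel. s \<notin> {a<..<b}"
    using ae
  proof eventually_elim
    case (elim s)
    show ?case
    proof
      assume s: "s \<in> {a<..<b}"
      then have "0 < s"
        using zeta_ext_nonneg[OF z, of "v x"] by (simp add: a_def)
      moreover have "x \<in> superlevel \<zeta> u s" "x \<notin> superlevel \<zeta> v s"
        using s by (auto simp: superlevel_def a_def b_def)
      ultimately show False
        using elim by blast
    qed
  qed
  then have "emeasure lborel {a<..<b} = 0"
    by (subst (asm) AE_iff_measurable[where N = "{a<..<b}"]) auto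
  then show False
    using \<open>a < b\<close> by simp
qed

lemma delta_H_eq_0_imp_eq:
  fixes u v :: "'a::euclidean_space \<Rightarrow> ereal"
  assumes z: "\<zeta> \<in> M0" and u: "u \<in> Conv_coe" and v: "v \<in> Conv_coe"
    and "delta_H \<zeta> u v = 0"
  shows "u = v"
proof -
  let ?d = "\<lambda>s. hat_dH (superlevel \<zeta> u s) (superlevel \<zeta> v s)"
  have "AE s in restrict_space lborel {0<..}. ennreal (?d s) = 0"
    using assms(4) unfolding delta_H_eq_restrict_space[OF z]
    by (subst (asm) nn_integral_0_iff_AE[OF borel_measurable_hat_dH_superlevel[OF z u v]])
  then have "AE s in lborel. s \<in> {0<..} \<longrightarrow> ennreal (?d s) = 0"
    by (simp add: AE_restrict_space_iff)
  then have ae: "AE s in lborel. 0 < s \<longrightarrow> superlevel \<zeta> u s = superlevel \<zeta> v s"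
  proof eventually_elim
    case (elim s)
    show ?case
    proof
      assume "0 < s"
      then have "compact (superlevel \<zeta> u s)" "compact (superlevel \<zeta> v s)"
        using compact_superlevel[OF z u] compact_superlevel[OF z v] by auto
      moreover from this have "?d s = 0"
        using elim \<open>0 < s\<close> hat_dH_nonneg[of "superlevel \<zeta> u s" "superlevel \<zeta> v s"]
        by (simp add: compact_imp_bounded)
      ultimately show "superlevel \<zeta> u s = superlevel \<zeta> v s"
        by (intro hat_dH_eq_0_imp_eq) (auto intro: compact_imp_bounded compact_imp_closed)
    qed
  qed
  then have ae': "AE s in lborel. 0 < s \<longrightarrow> superlevel \<zeta> v s = superlevel \<zeta> u s"
    by eventually_elim auto
  have "u x \<noteq> -\<infinity>" "v x \<noteq> -\<infinity>" for x
    using u v by (auto simp: Conv_coe_def proper_fun_def)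
  then show ?thesis
    using le_if_AE_superlevel_eq[OF z _ ae] le_if_AE_superlevel_eq[OF z _ ae'] by (blast intro: antisym)
qed

theorem lemma5p7:
  fixes \<zeta> :: "real \<Rightarrow> real"
  assumes "\<zeta> \<in> M0"
  shows "\<forall>u \<in> (Conv_coe :: (real^'n \<Rightarrow> ereal) set). \<forall>v \<in> Conv_coe. \<forall>w \<in> Conv_coe.
           delta_H \<zeta> u v < \<infinity>
         \<and> (delta_H \<zeta> u v = 0 \<longleftrightarrow> u = v)
         \<and> delta_H \<zeta> u v = delta_H \<zeta> v u
         \<and> delta_H \<zeta> u w \<le> delta_H \<zeta> u v + delta_H \<zeta> v w"
proof (intro ballI conjI)
  fix u v w :: "real^'n \<Rightarrow> ereal"
  assume u: "u \<in> Conv_coe" and v: "v \<in> Conv_coe" and w: "w \<in> Conv_coe"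
  show "delta_H \<zeta> u v < \<infinity>"
    using delta_H_finite[OF assms u v] .
  show "delta_H \<zeta> u v = 0 \<longleftrightarrow> u = v"
    using delta_H_eq_0_imp_eq[OF assms u v] delta_H_self by blast
  show "delta_H \<zeta> u v = delta_H \<zeta> v u"
    by (rule delta_H_commute)
  show "delta_H \<zeta> u w \<le> delta_H \<zeta> u v + delta_H \<zeta> v w"
    using delta_H_triangle[OF assms u v w] .
qed

end
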